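(* For integers $a_1\ge a_2\ge1$, \[ F(a_1+1,a_2-1,0)\ge F(a_1,a_2,0), \] unless $a_1$ is even and $a_2=1$.
   Context: Let $a_1,a_2,s$ be nonnegative integers and $a=a_1+a_2$. $F(a_1,a_2,s)$ is the number of pairs $(X,w)$ where $X\subseteq[a]$ has $|X|=a-s$ (so $F=0$ if $s>a$) and $w=(w_1,\dots,w_a)$ is a sequence listing each element of $X\cup\{a+1,\dots,a+s\}$ exactly once, such that if one rearranges $w_1,\dots,w_{a_1}$ in decreasing order and $w_{a_1+1},\dots,w_a$ in decreasing order, the resulting sequence $u$ satisfies $u_i\ne i$ for all $i\in[a]$. (For $s=0$, $F(a_1,a_2,0)$ is the number of permutations of $[a]$ which have no fixed point after sorting positions $1,\dots,a_1$ and positions $a_1+1,\dots,a$ each into decreasing order.) *)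

theory Defs
  imports Main
begin

text \<open>The sequence u: positions 1..a1 of w sorted decreasingly, then positions
  a1+1..a sorted decreasingly. Lists are 0-indexed, so position i (1-based) is index i-1.\<close>
definition sortblocks :: "nat \<Rightarrow> nat list \<Rightarrow> nat list" where
  "sortblocks a1 w = rev (sort (take a1 w)) @ rev (sort (drop a1 w))"

definition Fpairs :: "nat \<Rightarrow> nat \<Rightarrow> nat \<Rightarrow> (nat set \<times> nat list) set" where
  "Fpairs a1 a2 s = {(X, w).
     s \<le> a1 + a2 \<and>
     X \<subseteq> {1..a1 + a2} \<and> card X = a1 + a2 - s \<and>
     length w = a1 + a2 \<and> distinct w \<and> set w = X \<union> {a1 + a2 + 1..a1 + a2 + s} \<and>
     (\<forall>i\<in>{1..a1 + a2}. sortblocks a1 w ! (i - 1) \<noteq> i)}"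

definition F :: "nat \<Rightarrow> nat \<Rightarrow> nat \<Rightarrow> nat" where
  "F a1 a2 s = card (Fpairs a1 a2 s)"

end

theory Submission
  imports Defs "HOL-Combinatorics.Multiset_Permutations"
begin

text \<open>Sorting each block decreasingly only depends on the set A of entries of the first block,
  so F(a1, a2, 0) = a1! a2! N(a1, a2), where N(m, n) counts the 0/1 words with m ones and n
  zeros (the indicator words of A) whose block-sorted sequence has no fixed point. A fixed point
  in the first block is unique, and deleting it gives a bijection onto words with one 1 fewer and
  no such fixed point; reversing and complementing a word swaps the two blocks. Sorting all words
  by the kinds of fixed points they have, E(m+1, n+1) = N(m, n) satisfies
  E(m+1, n+1) + E(m, n+1) + E(m+1, n) + E(m, n) = C(m+n, m), which with Pascal's rule becomes
  E(m+1, n+1) = E(m, n+1) + E(m+1, n) + (-1)^(m+n). The claim is D(a1, a2) \<ge> 0 for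
  D(p, q) = (p+1) E(p+2, q) - q E(p+1, q+1), and the signed recurrence gives
  D(p+1, q+1) = D(p, q+1) + D(p+1, q) + (p+1-q) (-1)^(p+q). When the sign is negative, expanding
  D(p+1, q) once more leaves the correction +1, so induction from the explicit rows q = 1, 2, 3 and
  the diagonal D(q-1, q) = 0 gives D \<ge> 0; row q = 1 is negative exactly for even p, the excluded
  case.\<close>

section \<open>Fixed points of Boolean words\<close>

definition trues_from :: "bool list \<Rightarrow> nat \<Rightarrow> nat" where
  "trues_from bs k = length (filter id (drop k bs))"

definition falses_from :: "bool list \<Rightarrow> nat \<Rightarrow> nat" where
  "falses_from bs k = length (filter Not (drop k bs))"

text \<open>The word bs encodes the set A = {k+1 | bs ! k} of entries of the first block. A true
  (false) fixed point at index k is a fixed point u_(k+1) = k+1 of the block-sorted sequence in the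
  first (second) block: k+1 is then the (k+1)-th largest element of A (of its complement).\<close>

definition true_fixpoint :: "bool list \<Rightarrow> nat \<Rightarrow> bool" where
  "true_fixpoint bs k \<longleftrightarrow> k < length bs \<and> bs ! k \<and> trues_from bs k = Suc k"

definition false_fixpoint :: "bool list \<Rightarrow> nat \<Rightarrow> bool" where
  "false_fixpoint bs k \<longleftrightarrow>
     k < length bs \<and> \<not> bs ! k \<and> trues_from bs 0 + falses_from bs k = Suc k"

definition remove_at :: "nat \<Rightarrow> 'a list \<Rightarrow> 'a list" where
  "remove_at k xs = take k xs @ drop (Suc k) xs"

definition insert_at :: "nat \<Rightarrow> 'a \<Rightarrow> 'a list \<Rightarrow> 'a list" where
  "insert_at k x xs = take k xs @ x # drop k xs"

lemma trues_from_nth: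
  "k < length bs \<Longrightarrow> trues_from bs k = (if bs ! k then 1 else 0) + trues_from bs (Suc k)"
  unfolding trues_from_def by (simp add: Cons_nth_drop_Suc[symmetric])

lemma falses_from_nth:
  "k < length bs \<Longrightarrow> falses_from bs k = (if bs ! k then 0 else 1) + falses_from bs (Suc k)"
  unfolding falses_from_def by (simp add: Cons_nth_drop_Suc[symmetric])

lemma trues_from_beyond: "length bs \<le> k \<Longrightarrow> trues_from bs k = 0"
  unfolding trues_from_def by simp

lemma trues_from_antimono: "j \<le> k \<Longrightarrow> trues_from bs k \<le> trues_from bs j"
proof (induction k rule: dec_induct)
  case (step k)
  then show ?case
    by (cases "k < length bs") (auto simp: trues_from_nth trues_from_beyond)
qed simp

lemma true_fixpoint_unique: "true_fixpoint bs k \<Longrightarrow> true_fixpoint bs j \<Longrightarrow> k = j"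
  unfolding true_fixpoint_def
  using trues_from_antimono[of k j bs] trues_from_antimono[of j k bs] by (cases "k \<le> j") auto

lemma length_remove_at: "k < length xs \<Longrightarrow> length (remove_at k xs) = length xs - 1"
  unfolding remove_at_def by simp

lemma nth_remove_at_below: "j < k \<Longrightarrow> k < length xs \<Longrightarrow> remove_at k xs ! j = xs ! j"
  unfolding remove_at_def by (simp add: nth_append)

lemma nth_remove_at_above: "k \<le> j \<Longrightarrow> Suc j < length xs \<Longrightarrow> remove_at k xs ! j = xs ! Suc j"
  unfolding remove_at_def by (simp add: nth_append)

lemma drop_remove_at_below:
  assumes "j \<le> k" "k < length xs"
  shows "drop j xs = drop j (take k xs) @ xs ! k # drop (Suc k) xs"
    and "drop j (remove_at k xs) = drop j (take k xs) @ drop (Suc k) xs"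
proof -
  have "drop j xs = drop j (take k xs @ xs ! k # drop (Suc k) xs)"
    using assms(2) by (simp add: id_take_nth_drop[symmetric])
  then show "drop j xs = drop j (take k xs) @ xs ! k # drop (Suc k) xs"
    using assms by simp
  show "drop j (remove_at k xs) = drop j (take k xs) @ drop (Suc k) xs"
    using assms unfolding remove_at_def by simp
qed

lemma trues_from_remove_at_below:
  "j \<le> k \<Longrightarrow> k < length bs \<Longrightarrow>
     trues_from bs j = trues_from (remove_at k bs) j + (if bs ! k then 1 else 0)"
  unfolding trues_from_def by (simp add: drop_remove_at_below)

lemma falses_from_remove_at_below:
  "j \<le> k \<Longrightarrow> k < length bs \<Longrightarrow>
     falses_from bs j = falses_from (remove_at k bs) j + (if bs ! k then 0 else 1)"
  unfolding falses_from_def by (simp add: drop_remove_at_below)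

lemma trues_from_remove_at_above:
  "k \<le> j \<Longrightarrow> k < length bs \<Longrightarrow> trues_from (remove_at k bs) j = trues_from bs (Suc j)"
  unfolding trues_from_def remove_at_def by simp

lemma falses_from_remove_at_above:
  "k \<le> j \<Longrightarrow> k < length bs \<Longrightarrow> falses_from (remove_at k bs) j = falses_from bs (Suc j)"
  unfolding falses_from_def remove_at_def by simp

lemma length_insert_at: "k \<le> length xs \<Longrightarrow> length (insert_at k x xs) = Suc (length xs)"
  unfolding insert_at_def by simp

lemma nth_insert_at: "k \<le> length xs \<Longrightarrow> insert_at k x xs ! k = x"
  unfolding insert_at_def by (simp add: nth_append)

lemma remove_at_insert_at: "k \<le> length xs \<Longrightarrow> remove_at k (insert_at k x xs) = xs"
  unfolding insert_at_def remove_at_def by simp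

lemma insert_at_remove_at: "k < length xs \<Longrightarrow> insert_at k (xs ! k) (remove_at k xs) = xs"
  unfolding insert_at_def remove_at_def by (simp add: id_take_nth_drop[symmetric])

lemma no_true_fixpoint_remove_at:
  assumes "true_fixpoint bs k"
  shows "\<not> true_fixpoint (remove_at k bs) j"
proof
  assume j: "true_fixpoint (remove_at k bs) j"
  have k: "k < length bs" "bs ! k" "trues_from bs k = Suc k"
    using assms true_fixpoint_def by auto
  show False
  proof (cases "j < k")
    case True
    have "bs ! j" using j True k(1) nth_remove_at_below[of j k bs] true_fixpoint_def by auto
    then have "trues_from (remove_at k bs) j = trues_from bs (Suc j)"
      using trues_from_remove_at_below[of j k bs] trues_from_nth[of j bs] True k by simp
    moreover have "trues_from bs k \<le> trues_from bs (Suc j)"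
      using trues_from_antimono[of "Suc j" k bs] True by simp
    ultimately show False using j k True unfolding true_fixpoint_def by simp
  next
    case False
    have "trues_from (remove_at k bs) j = trues_from bs (Suc j)"
      using trues_from_remove_at_above[of k j bs] False k by simp
    moreover have "trues_from bs (Suc j) \<le> trues_from bs (Suc k)"
      using trues_from_antimono[of "Suc k" "Suc j" bs] False by simp
    moreover have "trues_from bs k = 1 + trues_from bs (Suc k)" using trues_from_nth[of k bs] k by simp
    ultimately show False using j k False unfolding true_fixpoint_def by simp
  qed
qed

lemma true_fixpoint_less_false_fixpoint:
  assumes "true_fixpoint bs k" "false_fixpoint bs j"
  shows "k < j"
proof -
  have "Suc k \<le> trues_from bs 0"
    using assms(1) trues_from_antimono[of 0 k bs] unfolding true_fixpoint_def by auto
  moreover have "1 \<le> falses_from bs j"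
    using assms(2) falses_from_nth[of j bs] unfolding false_fixpoint_def by auto
  ultimately show ?thesis using assms(2) unfolding false_fixpoint_def by linarith
qed

lemma false_fixpoint_remove_at_iff:
  assumes "true_fixpoint bs k"
  shows "false_fixpoint (remove_at k bs) j \<longleftrightarrow> false_fixpoint bs (Suc j)"
proof -
  have k: "k < length bs" "bs ! k" using assms unfolding true_fixpoint_def by auto
  have t0: "trues_from bs 0 = trues_from (remove_at k bs) 0 + 1"
    using trues_from_remove_at_below[of 0 k bs] k by simp
  have "k \<le> j" if "false_fixpoint (remove_at k bs) j"
  proof -
    have "Suc k \<le> trues_from bs 0"
      using assms trues_from_antimono[of 0 k bs] unfolding true_fixpoint_def by auto
    moreover have "1 \<le> falses_from (remove_at k bs) j"
      using that falses_from_nth[of j "remove_at k bs"] unfolding false_fixpoint_def by auto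
    ultimately show ?thesis using that t0 unfolding false_fixpoint_def by linarith
  qed
  moreover have "k \<le> j" if "false_fixpoint bs (Suc j)"
    using true_fixpoint_less_false_fixpoint[OF assms that] by simp
  moreover have "false_fixpoint (remove_at k bs) j \<longleftrightarrow> false_fixpoint bs (Suc j)" if "k \<le> j"
    unfolding false_fixpoint_def
    using that t0 k length_remove_at[of k bs] nth_remove_at_above[of k j bs]
      falses_from_remove_at_above[of k j bs] by (cases "Suc j < length bs") auto
  ultimately show ?thesis by blast
qed

lemma ex_false_fixpoint_remove_at:
  assumes "true_fixpoint bs k"
  shows "(\<exists>j. false_fixpoint (remove_at k bs) j) \<longleftrightarrow> (\<exists>j. false_fixpoint bs j)"
proof -
  have "\<exists>i. j = Suc i" if "false_fixpoint bs j" for j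
    using true_fixpoint_less_false_fixpoint[OF assms that] by (cases j) auto
  then show ?thesis using false_fixpoint_remove_at_iff[OF assms] by blast
qed

lemma trues_from_eq_index_unique:
  "trues_from v k = k \<Longrightarrow> trues_from v j = j \<Longrightarrow> k = j"
  using trues_from_antimono[of k j v] trues_from_antimono[of j k v] by (cases "k \<le> j") auto

lemma trues_from_eq_index_exists:
  assumes "\<forall>j. \<not> true_fixpoint v j"
  shows "\<exists>k \<le> length v. trues_from v k = k"
proof -
  have ex: "\<exists>k. trues_from v k \<le> k"
    using trues_from_beyond[of v "length v"] by (intro exI[of _ "length v"]) auto
  define k0 where "k0 = (LEAST k. trues_from v k \<le> k)"
  have k0: "trues_from v k0 \<le> k0" unfolding k0_def using LeastI_ex[OF ex] .
  have k0_le: "k0 \<le> length v"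
    unfolding k0_def using Least_le[of "\<lambda>k. trues_from v k \<le> k" "length v"]
      trues_from_beyond[of v "length v"] by simp
  show ?thesis
  proof (cases k0)
    case 0
    then show ?thesis using k0 by (intro exI[of _ 0]) auto
  next
    case (Suc j)
    have j_gt: "\<not> trues_from v j \<le> j"
      using not_less_Least[of j "\<lambda>k. trues_from v k \<le> k"] Suc k0_def by simp
    have j_less: "j < length v" using j_gt trues_from_beyond[of v j] by (cases "j < length v") auto
    have "\<not> true_fixpoint v j" using assms by blast
    then have "trues_from v k0 = k0"
      using trues_from_nth[OF j_less] k0 Suc j_gt j_less unfolding true_fixpoint_def
      by (auto split: if_splits)
    then show ?thesis using k0_le by auto
  qed
qed

lemma true_fixpoint_insert_at:
  assumes "k \<le> length v" "trues_from v k = k"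
  shows "true_fixpoint (insert_at k True v) k"
proof -
  let ?bs = "insert_at k True v"
  have "trues_from ?bs k = trues_from (remove_at k ?bs) k + 1"
    using trues_from_remove_at_below[of k k ?bs] assms
    by (simp add: length_insert_at nth_insert_at)
  then show ?thesis
    using remove_at_insert_at[OF assms(1)] assms unfolding true_fixpoint_def
    by (simp add: length_insert_at nth_insert_at)
qed

lemma trues_from_eq_index_remove_at:
  "true_fixpoint bs k \<Longrightarrow> k \<le> length (remove_at k bs) \<and> trues_from (remove_at k bs) k = k"
  using trues_from_remove_at_below[of k k bs] length_remove_at[of k bs]
  unfolding true_fixpoint_def by auto

definition remove_true_fixpoint :: "bool list \<Rightarrow> bool list" where
  "remove_true_fixpoint bs = remove_at (THE k. true_fixpoint bs k) bs"

definition insert_true_fixpoint :: "bool list \<Rightarrow> bool list" where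
  "insert_true_fixpoint v = insert_at (THE k. k \<le> length v \<and> trues_from v k = k) True v"

lemma remove_true_fixpoint_eq: "true_fixpoint bs k \<Longrightarrow> remove_true_fixpoint bs = remove_at k bs"
proof -
  assume "true_fixpoint bs k"
  then have "(THE k. true_fixpoint bs k) = k" using true_fixpoint_unique by blast
  then show ?thesis unfolding remove_true_fixpoint_def by simp
qed

lemma insert_true_fixpoint_eq:
  "k \<le> length v \<Longrightarrow> trues_from v k = k \<Longrightarrow> insert_true_fixpoint v = insert_at k True v"
proof -
  assume "k \<le> length v" "trues_from v k = k"
  then have "(THE k. k \<le> length v \<and> trues_from v k = k) = k"
    using trues_from_eq_index_unique by blast
  then show ?thesis unfolding insert_true_fixpoint_def by simp
qed

lemma insert_remove_true_fixpoint:
  assumes "true_fixpoint bs k"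
  shows "insert_true_fixpoint (remove_true_fixpoint bs) = bs"
proof -
  have "bs ! k" "k < length bs" using assms unfolding true_fixpoint_def by auto
  then show ?thesis
    using remove_true_fixpoint_eq[OF assms] trues_from_eq_index_remove_at[OF assms]
      insert_true_fixpoint_eq insert_at_remove_at[of k bs] by auto
qed

lemma remove_insert_true_fixpoint:
  assumes "k \<le> length v" "trues_from v k = k"
  shows "remove_true_fixpoint (insert_true_fixpoint v) = v"
  using insert_true_fixpoint_eq[OF assms] remove_true_fixpoint_eq[OF true_fixpoint_insert_at[OF assms]]
    remove_at_insert_at[OF assms(1)] by simp

section \<open>Words classified by their fixed points\<close>

definition words :: "nat \<Rightarrow> nat \<Rightarrow> bool list set" where
  "words m n = {bs. length bs = m + n \<and> trues_from bs 0 = m}"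

definition words_fix :: "nat \<Rightarrow> nat \<Rightarrow> bool \<Rightarrow> bool \<Rightarrow> bool list set" where
  "words_fix m n t f =
     {bs \<in> words m n. (\<exists>k. true_fixpoint bs k) = t \<and> (\<exists>k. false_fixpoint bs k) = f}"

lemma remove_true_fixpoint_in_words_fix:
  assumes "bs \<in> words_fix (Suc m) n True f"
  shows "remove_true_fixpoint bs \<in> words_fix m n False f"
proof -
  obtain k where fp: "true_fixpoint bs k" using assms unfolding words_fix_def by auto
  then have k: "k < length bs" "bs ! k" using true_fixpoint_def by auto
  have "trues_from bs 0 = trues_from (remove_at k bs) 0 + 1"
    using trues_from_remove_at_below[of 0 k bs] k by simp
  then show ?thesis
    using assms length_remove_at[of k bs] k no_true_fixpoint_remove_at[OF fp]
      ex_false_fixpoint_remove_at[OF fp] remove_true_fixpoint_eq[OF fp]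
    unfolding words_fix_def words_def by auto
qed

lemma insert_true_fixpoint_in_words_fix:
  assumes "v \<in> words_fix m n False f"
  shows "insert_true_fixpoint v \<in> words_fix (Suc m) n True f"
proof -
  obtain k where k: "k \<le> length v" "trues_from v k = k"
    using assms trues_from_eq_index_exists unfolding words_fix_def by blast
  let ?bs = "insert_at k True v"
  have fp: "true_fixpoint ?bs k" using true_fixpoint_insert_at[OF k] .
  have "trues_from ?bs 0 = trues_from v 0 + 1"
    using trues_from_remove_at_below[of 0 k ?bs] remove_at_insert_at[OF k(1)] k(1)
    by (simp add: length_insert_at nth_insert_at)
  then show ?thesis
    using assms k fp ex_false_fixpoint_remove_at[OF fp] remove_at_insert_at[OF k(1)]
      insert_true_fixpoint_eq[OF k]
    unfolding words_fix_def words_def by (auto simp: length_insert_at)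
qed

lemma bij_betw_remove_true_fixpoint:
  "bij_betw remove_true_fixpoint (words_fix (Suc m) n True f) (words_fix m n False f)"
proof (rule bij_betw_byWitness[where f' = insert_true_fixpoint])
  show "\<forall>bs\<in>words_fix (Suc m) n True f. insert_true_fixpoint (remove_true_fixpoint bs) = bs"
    using insert_remove_true_fixpoint unfolding words_fix_def by blast
  show "\<forall>v\<in>words_fix m n False f. remove_true_fixpoint (insert_true_fixpoint v) = v"
    using remove_insert_true_fixpoint trues_from_eq_index_exists unfolding words_fix_def by blast
  show "remove_true_fixpoint ` words_fix (Suc m) n True f \<subseteq> words_fix m n False f"
    using remove_true_fixpoint_in_words_fix by blast
  show "insert_true_fixpoint ` words_fix m n False f \<subseteq> words_fix (Suc m) n True f"
    using insert_true_fixpoint_in_words_fix by blast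
qed

lemma card_words_fix_Suc_True:
  "card (words_fix (Suc m) n True f) = card (words_fix m n False f)"
  using bij_betw_same_card[OF bij_betw_remove_true_fixpoint] .

lemma words_fix_0_True: "words_fix 0 n True f = {}"
proof -
  have "\<not> true_fixpoint bs k" if "trues_from bs 0 = 0" for bs k
    using that trues_from_antimono[of 0 k bs] unfolding true_fixpoint_def by auto
  then show ?thesis unfolding words_fix_def words_def by auto
qed

definition dual :: "bool list \<Rightarrow> bool list" where
  "dual bs = rev (map Not bs)"

lemma dual_dual [simp]: "dual (dual bs) = bs"
  unfolding dual_def by (simp add: rev_map comp_def)

lemma length_dual [simp]: "length (dual bs) = length bs"
  unfolding dual_def by simp

lemma trues_from_0_dual: "trues_from (dual bs) 0 = length bs - trues_from bs 0"
proof -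
  have "trues_from (dual bs) 0 = length (filter Not bs)"
    unfolding trues_from_def dual_def by (simp add: rev_filter[symmetric] filter_map comp_def)
  moreover have "length (filter id bs) + length (filter Not bs) = length bs"
    using sum_length_filter_compl[of id bs] by (simp add: comp_def)
  ultimately show ?thesis unfolding trues_from_def by simp
qed

lemma trues_take_plus_trues_from: "length (filter id (take i bs)) + trues_from bs i = trues_from bs 0"
  unfolding trues_from_def by (metis append_take_drop_id drop_0 filter_append length_append)

lemma falses_from_dual:
  "j \<le> length bs \<Longrightarrow> falses_from (dual bs) j = length (filter id (take (length bs - j) bs))"
proof -
  assume j: "j \<le> length bs"
  have "drop j (rev (map Not bs)) = rev (take (length bs - j) (map Not bs))"
    using rev_take[of "length bs - j" "map Not bs"] j by simp
  then show ?thesis unfolding falses_from_def dual_def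
    by (simp add: rev_filter[symmetric] filter_map comp_def take_map id_def)
qed

lemma true_fixpoint_iff_false_fixpoint_dual:
  assumes k: "k < length bs"
  shows "true_fixpoint bs k \<longleftrightarrow> false_fixpoint (dual bs) (length bs - Suc k)"
proof -
  define L where "L = length bs"
  define j where "j = length bs - Suc k"
  define t0 where "t0 = trues_from bs 0"
  define t1 where "t1 = trues_from bs (Suc k)"
  have nth_j: "dual bs ! j = (\<not> bs ! k)" unfolding dual_def j_def using k by (simp add: rev_nth)
  have falses_j: "falses_from (dual bs) j = t0 - t1"
    using falses_from_dual[of j bs] k trues_take_plus_trues_from[of "Suc k" bs]
    unfolding j_def t0_def t1_def by (simp add: Suc_diff_Suc)
  have "t1 \<le> t0" using trues_from_antimono[of 0 "Suc k" bs] unfolding t0_def t1_def by simp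
  moreover have "t0 \<le> L" unfolding trues_from_def t0_def L_def by simp
  moreover have "t1 \<le> L - Suc k" unfolding trues_from_def t1_def L_def
    by (metis length_drop length_filter_le)
  ultimately have "L - t0 + (t0 - t1) = L - k \<longleftrightarrow> t1 = k" using k unfolding L_def by linarith
  moreover have "true_fixpoint bs k \<longleftrightarrow> bs ! k \<and> t1 = k"
    unfolding true_fixpoint_def using k trues_from_nth[OF k] unfolding t1_def by auto
  moreover have "false_fixpoint (dual bs) j \<longleftrightarrow> bs ! k \<and> L - t0 + (t0 - t1) = L - k"
    unfolding false_fixpoint_def using nth_j falses_j trues_from_0_dual[of bs] k
    unfolding L_def t0_def j_def by auto
  ultimately show ?thesis unfolding j_def by simp
qed

lemma ex_true_fixpoint_iff_dual:
  "(\<exists>k. true_fixpoint bs k) \<longleftrightarrow> (\<exists>j. false_fixpoint (dual bs) j)"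
proof
  assume "\<exists>k. true_fixpoint bs k"
  then obtain k where k: "true_fixpoint bs k" by auto
  then have "k < length bs" using true_fixpoint_def by auto
  then show "\<exists>j. false_fixpoint (dual bs) j" using true_fixpoint_iff_false_fixpoint_dual k by auto
next
  assume "\<exists>j. false_fixpoint (dual bs) j"
  then obtain j where j: "false_fixpoint (dual bs) j" by auto
  then have "j < length bs" using false_fixpoint_def by auto
  then have "true_fixpoint bs (length bs - Suc j)"
    using true_fixpoint_iff_false_fixpoint_dual[of "length bs - Suc j" bs] j by simp
  then show "\<exists>k. true_fixpoint bs k" by blast
qed

lemma dual_in_words_fix: "bs \<in> words_fix m n t f \<Longrightarrow> dual bs \<in> words_fix n m f t"
  using trues_from_0_dual[of bs] ex_true_fixpoint_iff_dual[of bs]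
    ex_true_fixpoint_iff_dual[of "dual bs"]
  unfolding words_fix_def words_def by auto

lemma card_words_fix_swap: "card (words_fix m n t f) = card (words_fix n m f t)"
proof -
  have "bij_betw dual (words_fix m n t f) (words_fix n m f t)"
    by (rule bij_betw_byWitness[where f' = dual]) (auto intro: dual_in_words_fix)
  then show ?thesis by (rule bij_betw_same_card)
qed

lemma card_words: "card (words m n) = (m + n) choose m"
proof -
  have "card {bs. length bs = L \<and> trues_from bs 0 = m} = L choose m" for L
  proof (induction L arbitrary: m)
    case 0
    have "{bs. length bs = 0 \<and> trues_from bs 0 = m} = (if m = 0 then {[]} else {})"
      unfolding trues_from_def by auto
    then show ?case by simp
  next
    case (Suc L)
    let ?W = "\<lambda>m. {bs. length bs = L \<and> trues_from bs 0 = m}"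
    have fin: "finite (?W m)" for m
      using finite_lists_length_eq[of "UNIV :: bool set" L] by (auto intro: finite_subset)
    have cons: "trues_from (b # bs) 0 = (if b then 1 else 0) + trues_from bs 0" for b bs
      unfolding trues_from_def by simp
    show ?case
    proof (cases m)
      case 0
      then have "{bs. length bs = Suc L \<and> trues_from bs 0 = m} = Cons False ` ?W 0"
        using cons by (auto simp: length_Suc_conv split: if_splits)
      then show ?thesis using Suc.IH[of 0] 0 by (simp add: card_image)
    next
      case (Suc m')
      then have "{bs. length bs = Suc L \<and> trues_from bs 0 = m} =
          Cons True ` ?W m' \<union> Cons False ` ?W m"
        using cons by (auto simp: length_Suc_conv split: if_splits)
      moreover have "card (Cons True ` ?W m' \<union> Cons False ` ?W m) =
          card (Cons True ` ?W m') + card (Cons False ` ?W m)"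
        by (rule card_Un_disjoint) (use fin in auto)
      ultimately show ?thesis using Suc.IH[of m'] Suc.IH[of m] Suc by (simp add: card_image)
    qed
  qed
  then show ?thesis unfolding words_def by simp
qed

lemma finite_words: "finite (words m n)"
proof -
  have "finite {bs :: bool list. length bs = m + n}"
    using finite_lists_length_eq[of "UNIV :: bool set" "m + n"] by simp
  then show ?thesis unfolding words_def by (auto intro: finite_subset)
qed

lemma card_words_eq_sum_words_fix:
  "card (words m n) = card (words_fix m n False False) + card (words_fix m n True False)
     + card (words_fix m n False True) + card (words_fix m n True True)"
proof -
  let ?S = "words_fix m n"
  have fin: "finite (?S t f)" for t f using finite_words unfolding words_fix_def by auto
  have "words m n = ((?S False False \<union> ?S True False) \<union> ?S False True) \<union> ?S True True"
    unfolding words_fix_def by auto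
  moreover have "card (((?S False False \<union> ?S True False) \<union> ?S False True) \<union> ?S True True)
      = card (?S False False) + card (?S True False) + card (?S False True) + card (?S True True)"
    by (subst card_Un_disjoint, simp_all add: fin, (auto simp: words_fix_def)[1])+
  ultimately show ?thesis by simp
qed

definition fixfree :: "nat \<Rightarrow> nat \<Rightarrow> nat" where
  "fixfree m n = card (words_fix m n False False)"

text \<open>E in the outline above; padding by a zero row and column turns the counts of the three
  classes with a fixed point into values of the same array.\<close>

fun fixfree_ext :: "nat \<Rightarrow> nat \<Rightarrow> int" where
  "fixfree_ext (Suc m) (Suc n) = int (fixfree m n)"
| "fixfree_ext _ _ = 0"

lemma fixfree_ext_sym: "fixfree_ext m n = fixfree_ext n m"
  using card_words_fix_swap by (cases m; cases n) (auto simp: fixfree_def)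

lemma card_words_fix_True_False: "int (card (words_fix m n True False)) = fixfree_ext m (Suc n)"
  by (cases m) (auto simp: words_fix_0_True card_words_fix_Suc_True fixfree_def)

lemma card_words_fix_False_True: "int (card (words_fix m n False True)) = fixfree_ext (Suc m) n"
  using card_words_fix_swap[of m n False True] card_words_fix_True_False[of n m] fixfree_ext_sym
  by simp

lemma card_words_fix_True_True: "int (card (words_fix m n True True)) = fixfree_ext m n"
proof (cases m)
  case 0
  then show ?thesis by (simp add: words_fix_0_True)
next
  case (Suc m')
  then show ?thesis
    using card_words_fix_Suc_True[of m' n True] card_words_fix_False_True[of m' n]
    by (cases n) (simp_all add: fixfree_def card_words_fix_swap)
qed

lemma fixfree_ext_four_term:
  "fixfree_ext (Suc m) (Suc n) + fixfree_ext m (Suc n) + fixfree_ext (Suc m) n + fixfree_ext m n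
     = int ((m + n) choose m)"
  using card_words_eq_sum_words_fix[of m n] card_words[of m n] card_words_fix_True_False[of m n]
    card_words_fix_False_True[of m n] card_words_fix_True_True[of m n]
  by (simp add: fixfree_def)

section \<open>Arrays satisfying the four-term recurrence\<close>

locale four_term_array =
  fixes E :: "nat \<Rightarrow> nat \<Rightarrow> int"
  assumes E_0_left: "E 0 n = 0"
    and E_0_right: "E m 0 = 0"
    and four_term: "E (Suc m) (Suc n) + E m (Suc n) + E (Suc m) n + E m n = int ((m + n) choose m)"
    and E_sym: "E m n = E n m"
begin

lemma E_1_left_recurrence: "E 1 (Suc n) = E 1 n + E 0 (Suc n) + (-1) ^ n"
proof -
  have double: "2 * E 1 k = 1 - (-1) ^ k" for k
  proof (induction k)
    case 0
    then show ?case by (simp add: E_0_right)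
  next
    case (Suc k)
    have "E 1 (Suc k) + E 1 k = 1" using four_term[of 0 k] by (simp add: E_0_left)
    then show ?case using Suc by simp
  qed
  show ?thesis using double[of n] double[of "Suc n"] by (simp add: E_0_left)
qed

text \<open>The four-term identity at (m, n) minus those at (m-1, n) and (m, n-1) has no binomial
  term left (Pascal's rule), and the claim at (m-1, n), (m, n-1), (m-1, n-1) then yields it at
  (m, n).\<close>

lemma E_signed_recurrence: "E (Suc m) (Suc n) = E m (Suc n) + E (Suc m) n + (-1) ^ (m + n)"
proof (induction "m + n" arbitrary: m n rule: less_induct)
  case less
  show ?case
  proof (cases m)
    case 0
    then show ?thesis using E_1_left_recurrence[of n] by simp
  next
    case m: (Suc m')
    show ?thesis
    proof (cases n)
      case 0
      then show ?thesis using E_1_left_recurrence[of m] E_sym[of "Suc m" 1] E_sym[of m 1]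
        by (simp add: E_0_left E_0_right)
    next
      case n: (Suc n')
      have "E m (Suc n) = E m' (Suc n) + E m n + (-1) ^ (m' + n)"
        using less(1)[of m' n] m by simp
      moreover have "E (Suc m) n = E m n + E (Suc m) n' + (-1) ^ (m + n')"
        using less(1)[of m n'] n by simp
      moreover have "E m n = E m' n + E m n' + (-1) ^ (m' + n')"
        using less(1)[of m' n'] m n by simp
      moreover have "E m (Suc n) + E m' (Suc n) + E m n + E m' n = int ((m' + n) choose m')"
        using four_term[of m' n] m by simp
      moreover have "E (Suc m) n + E m n + E (Suc m) n' + E m n' = int ((m + n') choose m)"
        using four_term[of m n'] n by simp
      moreover have "int ((m + n) choose m) = int ((m' + n) choose m') + int ((m + n') choose m)"
        using m n by simp
      moreover have "(-1::int) ^ (m' + n) = - ((-1) ^ (m + n))"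
        "(-1::int) ^ (m + n') = - ((-1) ^ (m + n))" "(-1::int) ^ (m' + n') = (-1) ^ (m + n)"
        using m n by simp_all
      ultimately show ?thesis using four_term[of m n] by linarith
    qed
  qed
qed

definition defect :: "nat \<Rightarrow> nat \<Rightarrow> int" where
  "defect p q = int (p + 1) * E (p + 2) q - int q * E (p + 1) (q + 1)"

lemma defect_recurrence:
  "defect (Suc p) (Suc q) = defect p (Suc q) + defect (Suc p) q + (int p + 1 - int q) * (-1) ^ (p + q)"
  using E_signed_recurrence[of "Suc p + 1" q] E_signed_recurrence[of "Suc p" "Suc q"]
  unfolding defect_def by (simp add: algebra_simps)

lemma defect_diagonal: "defect q (Suc q) = 0"
  unfolding defect_def using E_sym[of "q + 2" "Suc q"] by (simp add: algebra_simps)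

lemma defect_0_right: "defect p 0 = 0"
  unfolding defect_def by (simp add: E_0_right)

lemma defect_0_left: "defect 0 q = E 2 q - int q * E 1 (Suc q)"
  unfolding defect_def by (simp add: numeral_2_eq_2)

lemma defect_odd_step:
  assumes "even (p + q)"
  shows "defect (Suc p) (Suc (Suc q)) =
    defect p (Suc (Suc q)) + defect p (Suc q) + defect (Suc p) q + 1"
proof -
  have "(-1::int) ^ (p + Suc q) = -1" "(-1::int) ^ (p + q) = 1" using assms by simp_all
  then show ?thesis
    using defect_recurrence[of p "Suc q"] defect_recurrence[of p q] by simp
qed

lemma defect_1: "defect p 1 = (if even p then - int (p div 2) else int (p div 2) + 1)"
proof (induction p)
  case 0
  then show ?case using defect_diagonal[of 0] by simp
next
  case (Suc p)
  show ?case
  proof (cases "even p")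
    case True
    then obtain k where "p = 2 * k" by blast
    then show ?thesis using Suc defect_recurrence[of p 0] by (simp add: defect_0_right)
  next
    case False
    then obtain k where "p = 2 * k + 1" by (blast elim: oddE)
    then show ?thesis using Suc defect_recurrence[of p 0] by (simp add: defect_0_right)
  qed
qed

lemma defect_2: "defect p 2 = (if even p then int (p div 2) - 1 else 0)"
proof (induction p)
  case 0
  have "E 2 2 = 1" "E 1 3 = 1"
    using E_signed_recurrence[of 1 1] E_signed_recurrence[of 0 2] E_1_left_recurrence[of 0]
      E_1_left_recurrence[of 1] E_sym[of 2 1] by (simp_all add: E_0_left E_0_right eval_nat_numeral)
  then show ?case using defect_0_left[of 2] by (simp add: eval_nat_numeral)
next
  case (Suc p)
  have rec: "defect (Suc p) 2 = defect p 2 + defect (Suc p) 1 - int p * (-1) ^ p"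
    using defect_recurrence[of p 1] by (simp add: numeral_2_eq_2)
  show ?case
  proof (cases "even p")
    case True
    then obtain k where "p = 2 * k" by blast
    then show ?thesis using Suc rec defect_1[of "Suc p"] by simp
  next
    case False
    then obtain k where "p = 2 * k + 1" by (blast elim: oddE)
    then show ?thesis using Suc rec defect_1[of "Suc p"] by simp
  qed
qed

lemma defect_3:
  "2 * defect p 3 =
     (if even p then (int (p div 2) - 1) * (int (p div 2) - 2) else int (p div 2) * (int (p div 2) + 1))"
proof (induction p)
  case 0
  have "E 2 3 = 1" "E 1 4 = 0"
    using E_signed_recurrence[of 1 2] E_signed_recurrence[of 1 1] E_signed_recurrence[of 0 2]
      E_1_left_recurrence[of 0] E_1_left_recurrence[of 1] E_1_left_recurrence[of 2]
      E_1_left_recurrence[of 3] E_sym[of 2 1]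
    by (simp_all add: E_0_left E_0_right eval_nat_numeral)
  then show ?case using defect_0_left[of 3] by (simp add: eval_nat_numeral)
next
  case (Suc p)
  have rec: "defect (Suc p) 3 = defect p 3 + defect (Suc p) 2 + (int p - 1) * (-1) ^ p"
    using defect_recurrence[of p 2] by (simp add: numeral_3_eq_3)
  show ?case
  proof (cases "even p")
    case True
    then obtain k where "p = 2 * k" by blast
    then show ?thesis using Suc rec defect_2[of "Suc p"] by (simp add: algebra_simps)
  next
    case False
    then obtain k where "p = 2 * k + 1" by (blast elim: oddE)
    then show ?thesis using Suc rec defect_2[of "Suc p"] by (simp add: algebra_simps)
  qed
qed

lemma defect_2_nonneg: "1 \<le> p \<Longrightarrow> defect p 2 \<ge> 0"
proof -
  assume "1 \<le> p"
  then have "even p \<Longrightarrow> 1 \<le> p div 2" by presburger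
  then show ?thesis using defect_2[of p] by (cases "even p") auto
qed

lemma defect_3_nonneg: "2 \<le> p \<Longrightarrow> defect p 3 \<ge> 0"
proof -
  assume "2 \<le> p"
  have "0 \<le> 2 * defect p 3"
  proof (cases "even p")
    case True
    then have "1 \<le> p div 2" using \<open>2 \<le> p\<close> by presburger
    then show ?thesis
      using defect_3[of p] True by (cases "p div 2 = 1") (auto intro: mult_nonneg_nonneg)
  next
    case False
    then show ?thesis using defect_3[of p] by simp
  qed
  then show ?thesis by simp
qed

lemma defect_nonneg: "2 \<le> q \<Longrightarrow> q \<le> p + 1 \<Longrightarrow> defect p q \<ge> 0"
proof (induction "p + q" arbitrary: p q rule: less_induct)
  case less
  consider "q = 2" | "q = 3" | "q = p + 1" | "4 \<le> q" "q \<le> p" using less(2,3) by linarith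
  then show ?case
  proof cases
    case 1
    then show ?thesis using defect_2_nonneg less(3) by simp
  next
    case 2
    then show ?thesis using defect_3_nonneg less(3) by simp
  next
    case 3
    then show ?thesis using defect_diagonal[of p] by simp
  next
    case 4
    define p' q' where "p' = p - 1" and "q' = q - 2"
    have pq: "p = Suc p'" "q = Suc (Suc q')" using 4 unfolding p'_def q'_def by auto
    have ih: "0 \<le> defect p' (Suc (Suc q'))" "0 \<le> defect p' (Suc q')" "0 \<le> defect p (Suc q')"
      "0 \<le> defect p q'"
      using less(1)[of p' "Suc (Suc q')"] less(1)[of p' "Suc q'"] less(1)[of p "Suc q'"]
        less(1)[of p q'] 4 pq by simp_all
    show ?thesis
    proof (cases "even (p' + Suc q')")
      case True
      then show ?thesis using defect_recurrence[of p' "Suc q'"] ih 4 pq by simp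
    next
      case False
      then show ?thesis using defect_odd_step[of p' q'] ih pq by simp
    qed
  qed
qed

end

section \<open>From permutations to words\<close>

lemma set_take_sorted_wrt_less:
  fixes xs :: "'a::linorder list"
  assumes "sorted_wrt (<) xs" "i < length xs"
  shows "set (take i xs) = {x \<in> set xs. x < xs ! i}"
proof -
  have less_iff: "xs ! j < xs ! i \<longleftrightarrow> j < i" if "j < length xs" for j
    using sorted_wrt_nth_less[OF assms(1)] assms(2) that by (metis less_asym linorder_neqE_nat)
  have "set (take i xs) = (!) xs ` {..<i}"
    using nth_image[of i xs] assms(2) by (simp add: atLeast0LessThan)
  also have "\<dots> = {x \<in> set xs. x < xs ! i}"
  proof (intro set_eqI iffI)
    fix x assume "x \<in> (!) xs ` {..<i}"
    then show "x \<in> {x \<in> set xs. x < xs ! i}" using less_iff assms(2) by auto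
  next
    fix x assume "x \<in> {x \<in> set xs. x < xs ! i}"
    then obtain j where "j < length xs" "x = xs ! j" "xs ! j < xs ! i" by (auto simp: in_set_conv_nth)
    then show "x \<in> (!) xs ` {..<i}" using less_iff by auto
  qed
  finally show ?thesis .
qed

lemma nth_sorted_list_of_set_eq_iff:
  fixes A :: "'a::linorder set"
  assumes "finite A" "j < card A"
  shows "sorted_list_of_set A ! j = v \<longleftrightarrow> v \<in> A \<and> card {x \<in> A. x < v} = j"
proof -
  let ?xs = "sorted_list_of_set A"
  have rank: "card {x \<in> A. x < ?xs ! i} = i" if "i < card A" for i
    using set_take_sorted_wrt_less[of ?xs i] distinct_card[of "take i ?xs"] assms(1) that by simp
  show ?thesis
  proof
    assume "?xs ! j = v"
    then show "v \<in> A \<and> card {x \<in> A. x < v} = j"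
      using rank[OF assms(2)] assms nth_mem[of j ?xs] by auto
  next
    assume v: "v \<in> A \<and> card {x \<in> A. x < v} = j"
    then obtain i where "i < card A" "?xs ! i = v" using assms(1) by (metis in_set_conv_nth
      length_sorted_list_of_set set_sorted_list_of_set)
    then have "i = j" using rank v by auto
    then show "?xs ! j = v" using \<open>?xs ! i = v\<close> by simp
  qed
qed

lemma card_less_plus_card_ge:
  fixes A :: "'a::linorder set"
  assumes "finite A"
  shows "card {x \<in> A. x < v} + card {x \<in> A. v \<le> x} = card A"
proof -
  have "card A = card ({x \<in> A. x < v} \<union> {x \<in> A. v \<le> x})"
    by (rule arg_cong[where f = card]) auto
  also have "\<dots> = card {x \<in> A. x < v} + card {x \<in> A. v \<le> x}"
    by (rule card_Un_disjoint) (use assms in auto)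
  finally show ?thesis by simp
qed

lemma nth_rev_sorted_list_of_set_eq_iff:
  fixes A :: "'a::linorder set"
  assumes "finite A" "1 \<le> j" "j \<le> card A"
  shows "rev (sorted_list_of_set A) ! (j - 1) = v \<longleftrightarrow> v \<in> A \<and> card {x \<in> A. v \<le> x} = j"
proof -
  have "rev (sorted_list_of_set A) ! (j - 1) = sorted_list_of_set A ! (card A - j)"
    using assms by (simp add: rev_nth)
  then show ?thesis
    using nth_sorted_list_of_set_eq_iff[of A "card A - j" v] card_less_plus_card_ge[OF assms(1), of v]
      assms by auto
qed

definition indicator_word :: "nat \<Rightarrow> nat set \<Rightarrow> bool list" where
  "indicator_word a A = map (\<lambda>k. Suc k \<in> A) [0..<a]"

definition set_of_word :: "bool list \<Rightarrow> nat set" where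
  "set_of_word bs = {x \<in> {1..length bs}. bs ! (x - 1)}"

lemma length_indicator_word [simp]: "length (indicator_word a A) = a"
  unfolding indicator_word_def by simp

lemma nth_indicator_word: "k < a \<Longrightarrow> indicator_word a A ! k = (Suc k \<in> A)"
  unfolding indicator_word_def by simp

lemma set_of_word_indicator_word: "A \<subseteq> {1..a} \<Longrightarrow> set_of_word (indicator_word a A) = A"
  unfolding set_of_word_def by (force simp: nth_indicator_word)

lemma indicator_word_set_of_word: "indicator_word (length bs) (set_of_word bs) = bs"
  by (rule nth_equalityI) (auto simp: nth_indicator_word set_of_word_def)

lemma length_filter_Suc_mem:
  assumes "A \<subseteq> {1..a}"
  shows "length (filter (\<lambda>t. Suc t \<in> A) [k..<a]) = card {x \<in> A. Suc k \<le> x}"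
proof -
  let ?T = "{t. Suc t \<in> A} \<inter> {k..<a}"
  have "Suc ` ?T = {x \<in> A. Suc k \<le> x}"
  proof (intro equalityI subsetI)
    fix x assume "x \<in> {x \<in> A. Suc k \<le> x}"
    then have "x - 1 \<in> ?T" "x = Suc (x - 1)" using assms by auto
    then show "x \<in> Suc ` ?T" by blast
  qed auto
  then show ?thesis
    using distinct_length_filter[of "[k..<a]" "\<lambda>t. Suc t \<in> A"] card_image[of Suc ?T] by simp
qed

lemma trues_from_indicator_word:
  "A \<subseteq> {1..a} \<Longrightarrow> trues_from (indicator_word a A) k = card {x \<in> A. Suc k \<le> x}"
  unfolding trues_from_def indicator_word_def
  by (simp add: drop_map filter_map comp_def length_filter_Suc_mem)

lemma trues_from_0_indicator_word: "A \<subseteq> {1..a} \<Longrightarrow> trues_from (indicator_word a A) 0 = card A"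
  using trues_from_indicator_word[of A a 0] by (simp add: Suc_le_eq subset_iff Collect_conj_eq Int_absorb2)

lemma falses_from_indicator_word:
  assumes "A \<subseteq> {1..a}"
  shows "falses_from (indicator_word a A) k = card {x \<in> {1..a} - A. Suc k \<le> x}"
proof -
  have "falses_from (indicator_word a A) k = length (filter (\<lambda>t. Suc t \<in> {1..a} - A) [k..<a])"
    unfolding falses_from_def indicator_word_def
    by (auto simp: drop_map filter_map comp_def intro!: arg_cong[where f = length] filter_cong)
  also have "\<dots> = card {x \<in> {1..a} - A. Suc k \<le> x}" by (rule length_filter_Suc_mem) auto
  finally show ?thesis .
qed

definition blocks_of_set :: "nat \<Rightarrow> nat \<Rightarrow> nat set \<Rightarrow> nat list" where
  "blocks_of_set a1 a2 A =
     rev (sorted_list_of_set A) @ rev (sorted_list_of_set ({1..a1 + a2} - A))"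

lemma nth_blocks_of_set_eq_Suc_iff:
  assumes A: "A \<subseteq> {1..a1 + a2}" "card A = a1" and k: "k < a1 + a2"
  defines "w \<equiv> indicator_word (a1 + a2) A"
  shows "blocks_of_set a1 a2 A ! k = Suc k \<longleftrightarrow> true_fixpoint w k \<or> false_fixpoint w k"
proof -
  let ?B = "{1..a1 + a2} - A"
  have fin: "finite A" using A finite_subset by blast
  have card_B: "card ?B = a2" using A fin by (simp add: card_Diff_subset)
  have true_fix: "true_fixpoint w k \<longleftrightarrow> Suc k \<in> A \<and> card {x \<in> A. Suc k \<le> x} = Suc k"
    unfolding true_fixpoint_def w_def
    using k nth_indicator_word[OF k] trues_from_indicator_word[OF A(1)] by auto
  have false_fix: "false_fixpoint w k \<longleftrightarrow> Suc k \<in> ?B \<and> a1 + card {x \<in> ?B. Suc k \<le> x} = Suc k"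
    unfolding false_fixpoint_def w_def
    using k nth_indicator_word[OF k] trues_from_0_indicator_word[OF A(1)]
      falses_from_indicator_word[OF A(1)] A(2) by auto
  have card_A_le: "card {x \<in> A. Suc k \<le> x} \<le> a1" using A(2) fin by (auto intro: card_mono)
  have card_B_pos: "card {x \<in> ?B. Suc k \<le> x} \<ge> 1" if "Suc k \<in> ?B"
    using that card_gt_0_iff[of "{x \<in> ?B. Suc k \<le> x}"] by fastforce
  show ?thesis
  proof (cases "Suc k \<le> a1")
    case True
    then have "blocks_of_set a1 a2 A ! k = rev (sorted_list_of_set A) ! (Suc k - 1)"
      unfolding blocks_of_set_def using A fin by (simp add: nth_append)
    moreover have "\<not> false_fixpoint w k" using false_fix card_B_pos True by fastforce
    ultimately show ?thesis
      using nth_rev_sorted_list_of_set_eq_iff[OF fin, of "Suc k" "Suc k"] True true_fix A(2) by simp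
  next
    case False
    then have "blocks_of_set a1 a2 A ! k = rev (sorted_list_of_set ?B) ! (Suc k - a1 - 1)"
      unfolding blocks_of_set_def using A fin by (simp add: nth_append Suc_diff_le)
    moreover have "\<not> true_fixpoint w k" using true_fix card_A_le False by auto
    moreover have "1 \<le> Suc k - a1" "Suc k - a1 \<le> card ?B" using False k card_B by auto
    ultimately show ?thesis
      using nth_rev_sorted_list_of_set_eq_iff[of ?B "Suc k - a1" "Suc k"] False false_fix by auto
  qed
qed

definition fixpoint_free_sets :: "nat \<Rightarrow> nat \<Rightarrow> nat set set" where
  "fixpoint_free_sets a1 a2 = {A. A \<subseteq> {1..a1 + a2} \<and> card A = a1 \<and>
     (\<forall>i\<in>{1..a1 + a2}. blocks_of_set a1 a2 A ! (i - 1) \<noteq> i)}"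

lemma fixpoint_free_iff_no_word_fixpoint:
  assumes "A \<subseteq> {1..a1 + a2}" "card A = a1"
  shows "(\<forall>i\<in>{1..a1 + a2}. blocks_of_set a1 a2 A ! (i - 1) \<noteq> i) \<longleftrightarrow>
    (\<forall>k. \<not> true_fixpoint (indicator_word (a1 + a2) A) k) \<and>
    (\<forall>k. \<not> false_fixpoint (indicator_word (a1 + a2) A) k)"
proof -
  have "(\<forall>i\<in>{1..a1 + a2}. blocks_of_set a1 a2 A ! (i - 1) \<noteq> i) \<longleftrightarrow>
      (\<forall>k < a1 + a2. blocks_of_set a1 a2 A ! k \<noteq> Suc k)"
  proof (intro iffI allI impI ballI)
    fix k assume all: "\<forall>i\<in>{1..a1 + a2}. blocks_of_set a1 a2 A ! (i - 1) \<noteq> i"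
      and "k < a1 + a2"
    then have "Suc k \<in> {1..a1 + a2}" by simp
    then show "blocks_of_set a1 a2 A ! k \<noteq> Suc k" using all[rule_format, of "Suc k"] by simp
  next
    fix i assume "\<forall>k < a1 + a2. blocks_of_set a1 a2 A ! k \<noteq> Suc k" "i \<in> {1..a1 + a2}"
    then show "blocks_of_set a1 a2 A ! (i - 1) \<noteq> i" by (cases i) auto
  qed
  moreover have "true_fixpoint (indicator_word (a1 + a2) A) k \<Longrightarrow> k < a1 + a2"
    "false_fixpoint (indicator_word (a1 + a2) A) k \<Longrightarrow> k < a1 + a2" for k
    by (simp_all add: true_fixpoint_def false_fixpoint_def)
  ultimately show ?thesis using nth_blocks_of_set_eq_Suc_iff[OF assms] by blast
qed

lemma bij_betw_indicator_word:
  "bij_betw (indicator_word (a1 + a2)) (fixpoint_free_sets a1 a2) (words_fix a1 a2 False False)"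
proof (rule bij_betw_byWitness[where f' = set_of_word])
  show "\<forall>A\<in>fixpoint_free_sets a1 a2. set_of_word (indicator_word (a1 + a2) A) = A"
    unfolding fixpoint_free_sets_def using set_of_word_indicator_word by blast
  show "\<forall>bs\<in>words_fix a1 a2 False False. indicator_word (a1 + a2) (set_of_word bs) = bs"
  proof
    fix bs assume "bs \<in> words_fix a1 a2 False False"
    then have "length bs = a1 + a2" unfolding words_fix_def words_def by simp
    then show "indicator_word (a1 + a2) (set_of_word bs) = bs"
      using indicator_word_set_of_word[of bs] by simp
  qed
  show "indicator_word (a1 + a2) ` fixpoint_free_sets a1 a2 \<subseteq> words_fix a1 a2 False False"
  proof
    fix bs assume "bs \<in> indicator_word (a1 + a2) ` fixpoint_free_sets a1 a2"
    then obtain A where A: "A \<subseteq> {1..a1 + a2}" "card A = a1"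
      "\<forall>i\<in>{1..a1 + a2}. blocks_of_set a1 a2 A ! (i - 1) \<noteq> i"
      and bs: "bs = indicator_word (a1 + a2) A"
      unfolding fixpoint_free_sets_def by blast
    then show "bs \<in> words_fix a1 a2 False False"
      using fixpoint_free_iff_no_word_fixpoint[OF A(1,2)] trues_from_0_indicator_word[OF A(1)]
      unfolding words_fix_def words_def by simp
  qed
  show "set_of_word ` words_fix a1 a2 False False \<subseteq> fixpoint_free_sets a1 a2"
  proof
    fix A assume "A \<in> set_of_word ` words_fix a1 a2 False False"
    then obtain bs where bs: "bs \<in> words_fix a1 a2 False False" "A = set_of_word bs" by auto
    have A: "A \<subseteq> {1..a1 + a2}" using bs unfolding set_of_word_def words_fix_def words_def by auto
    have w: "indicator_word (a1 + a2) A = bs"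
      using bs indicator_word_set_of_word[of bs] unfolding words_fix_def words_def by auto
    then have "card A = a1"
      using trues_from_0_indicator_word[OF A] bs unfolding words_fix_def words_def by auto
    moreover have "\<forall>i\<in>{1..a1 + a2}. blocks_of_set a1 a2 A ! (i - 1) \<noteq> i"
      using fixpoint_free_iff_no_word_fixpoint[OF A \<open>card A = a1\<close>] w bs(1)
      unfolding words_fix_def by simp
    ultimately show "A \<in> fixpoint_free_sets a1 a2" using A unfolding fixpoint_free_sets_def by blast
  qed
qed

lemma card_fixpoint_free_sets: "card (fixpoint_free_sets a1 a2) = fixfree a1 a2"
  unfolding fixfree_def using bij_betw_same_card[OF bij_betw_indicator_word] .

definition block_perms :: "nat \<Rightarrow> nat \<Rightarrow> nat set \<Rightarrow> nat list set" where
  "block_perms a1 a2 A =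
     {w. length w = a1 + a2 \<and> distinct w \<and> set w = {1..a1 + a2} \<and> set (take a1 w) = A}"

lemma set_drop_eq_diff_set_take:
  assumes "distinct xs"
  shows "set (drop n xs) = set xs - set (take n xs)"
proof -
  have "set xs = set (take n xs) \<union> set (drop n xs)" by (metis append_take_drop_id set_append)
  moreover have "set (take n xs) \<inter> set (drop n xs) = {}"
    using set_take_disj_set_drop_if_distinct[OF assms, of n n] by simp
  ultimately show ?thesis by blast
qed

lemma block_perms_eq_image_append:
  assumes "A \<subseteq> {1..a1 + a2}" "card A = a1"
  shows "block_perms a1 a2 A =
    (\<lambda>(xs, ys). xs @ ys) ` (permutations_of_set A \<times> permutations_of_set ({1..a1 + a2} - A))"
proof (intro equalityI subsetI)
  fix w assume "w \<in> block_perms a1 a2 A"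
  then have w: "distinct w" "set w = {1..a1 + a2}" "set (take a1 w) = A"
    unfolding block_perms_def by auto
  then have "(take a1 w, drop a1 w) \<in> permutations_of_set A \<times> permutations_of_set ({1..a1 + a2} - A)"
    using set_drop_eq_diff_set_take[OF w(1), of a1] by (auto intro: distinct_take distinct_drop)
  then show "w \<in> (\<lambda>(xs, ys). xs @ ys) ` (permutations_of_set A \<times> permutations_of_set ({1..a1 + a2} - A))"
    by (rule rev_image_eqI) simp
next
  fix w assume "w \<in> (\<lambda>(xs, ys). xs @ ys) ` (permutations_of_set A \<times> permutations_of_set ({1..a1 + a2} - A))"
  then obtain xs ys where p: "xs \<in> permutations_of_set A" "ys \<in> permutations_of_set ({1..a1 + a2} - A)"
    and w: "w = xs @ ys" by auto
  have "finite A" using assms(1) finite_subset by blast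
  then have "length xs = a1" "length ys = a2"
    using p assms by (simp_all add: length_finite_permutations_of_set card_Diff_subset)
  then show "w \<in> block_perms a1 a2 A"
    using p w assms(1) unfolding block_perms_def permutations_of_set_def by auto
qed

lemma card_block_perms:
  assumes "A \<subseteq> {1..a1 + a2}" "card A = a1"
  shows "card (block_perms a1 a2 A) = fact a1 * fact a2"
proof -
  let ?P = "permutations_of_set A \<times> permutations_of_set ({1..a1 + a2} - A)"
  have "finite A" using assms(1) finite_subset by blast
  have "inj_on (\<lambda>(xs, ys). xs @ ys) ?P"
    by (rule inj_onI) (auto simp: length_finite_permutations_of_set)
  then have "card (block_perms a1 a2 A) = card ?P"
    by (simp add: block_perms_eq_image_append[OF assms] card_image)
  also have "\<dots> = fact a1 * fact a2"
    using \<open>finite A\<close> assms by (simp add: card_cartesian_product card_Diff_subset)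
  finally show ?thesis .
qed

definition fixpoint_free_perms :: "nat \<Rightarrow> nat \<Rightarrow> nat list set" where
  "fixpoint_free_perms a1 a2 = {w. length w = a1 + a2 \<and> distinct w \<and> set w = {1..a1 + a2} \<and>
     (\<forall>i\<in>{1..a1 + a2}. sortblocks a1 w ! (i - 1) \<noteq> i)}"

lemma sortblocks_eq_blocks_of_set:
  assumes "distinct w" "set w = {1..a1 + a2}"
  shows "sortblocks a1 w = blocks_of_set a1 a2 (set (take a1 w))"
proof -
  have "sort xs = sorted_list_of_set (set xs)" if "distinct xs" for xs :: "nat list"
    using that by (simp add: sorted_list_of_set_sort_remdups distinct_remdups_id)
  then show ?thesis
    unfolding sortblocks_def blocks_of_set_def
    using set_drop_eq_diff_set_take[OF assms(1), of a1] assms by (simp add: distinct_take distinct_drop)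
qed

lemma fixpoint_free_perms_eq_UN:
  "fixpoint_free_perms a1 a2 = (\<Union>A\<in>fixpoint_free_sets a1 a2. block_perms a1 a2 A)"
proof (intro equalityI subsetI)
  fix w assume "w \<in> fixpoint_free_perms a1 a2"
  then have w: "length w = a1 + a2" "distinct w" "set w = {1..a1 + a2}"
    and fp: "\<forall>i\<in>{1..a1 + a2}. sortblocks a1 w ! (i - 1) \<noteq> i"
    unfolding fixpoint_free_perms_def by auto
  have "card (set (take a1 w)) = a1" using w distinct_card[of "take a1 w"] by (simp add: distinct_take)
  moreover have "set (take a1 w) \<subseteq> {1..a1 + a2}" using w(3) set_take_subset[of a1 w] by simp
  ultimately have "set (take a1 w) \<in> fixpoint_free_sets a1 a2"
    using fp sortblocks_eq_blocks_of_set[OF w(2,3)] unfolding fixpoint_free_sets_def by simp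
  moreover have "w \<in> block_perms a1 a2 (set (take a1 w))" using w unfolding block_perms_def by simp
  ultimately show "w \<in> (\<Union>A\<in>fixpoint_free_sets a1 a2. block_perms a1 a2 A)" by blast
next
  fix w assume "w \<in> (\<Union>A\<in>fixpoint_free_sets a1 a2. block_perms a1 a2 A)"
  then obtain A where "A \<in> fixpoint_free_sets a1 a2" "w \<in> block_perms a1 a2 A" by auto
  then show "w \<in> fixpoint_free_perms a1 a2"
    using sortblocks_eq_blocks_of_set[of w a1 a2]
    unfolding fixpoint_free_perms_def fixpoint_free_sets_def block_perms_def by auto
qed

lemma card_fixpoint_free_perms:
  "card (fixpoint_free_perms a1 a2) = fixfree a1 a2 * (fact a1 * fact a2)"
proof -
  have "fixpoint_free_sets a1 a2 \<subseteq> Pow {1..a1 + a2}" unfolding fixpoint_free_sets_def by blast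
  then have "finite (fixpoint_free_sets a1 a2)" by (rule finite_subset) simp
  moreover have "finite (block_perms a1 a2 A)" for A
    by (rule finite_subset[of _ "permutations_of_set {1..a1 + a2}"])
      (auto simp: block_perms_def)
  ultimately have "card (\<Union>A\<in>fixpoint_free_sets a1 a2. block_perms a1 a2 A) =
      (\<Sum>A\<in>fixpoint_free_sets a1 a2. card (block_perms a1 a2 A))"
    by (intro card_UN_disjoint) (auto simp: block_perms_def)
  also have "\<dots> = (\<Sum>A\<in>fixpoint_free_sets a1 a2. fact a1 * fact a2)"
    by (rule sum.cong) (simp_all add: fixpoint_free_sets_def card_block_perms)
  finally show ?thesis using fixpoint_free_perms_eq_UN card_fixpoint_free_sets by simp
qed

lemma F_0_eq: "F a1 a2 0 = fixfree a1 a2 * (fact a1 * fact a2)"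
proof -
  have "Fpairs a1 a2 0 = (\<lambda>w. ({1..a1 + a2}, w)) ` fixpoint_free_perms a1 a2"
  proof (intro equalityI subsetI)
    fix p assume "p \<in> Fpairs a1 a2 0"
    then obtain X w where p: "p = (X, w)" and X: "X \<subseteq> {1..a1 + a2}" "card X = a1 + a2"
      and w: "length w = a1 + a2" "distinct w" "set w = X"
        "\<forall>i\<in>{1..a1 + a2}. sortblocks a1 w ! (i - 1) \<noteq> i"
      unfolding Fpairs_def by auto
    have "X = {1..a1 + a2}" using card_subset_eq[of "{1..a1 + a2}" X] X by simp
    then show "p \<in> (\<lambda>w. ({1..a1 + a2}, w)) ` fixpoint_free_perms a1 a2"
      using p w unfolding fixpoint_free_perms_def by auto
  qed (auto simp: Fpairs_def fixpoint_free_perms_def)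
  then have "card (Fpairs a1 a2 0) = card (fixpoint_free_perms a1 a2)"
    by (simp add: card_image inj_on_def)
  then show ?thesis unfolding F_def using card_fixpoint_free_perms by simp
qed

interpretation fixfree_ext: four_term_array fixfree_ext
proof
  show "fixfree_ext 0 n = 0" for n by simp
  show "fixfree_ext m 0 = 0" for m by (cases m) simp_all
qed (rule fixfree_ext_four_term, rule fixfree_ext_sym)

theorem mainTheorem15:
  fixes a1 a2 :: nat
  assumes "a1 \<ge> a2" and "a2 \<ge> 1"
    and "\<not> (even a1 \<and> a2 = 1)"
  shows "F (a1 + 1) (a2 - 1) 0 \<ge> F a1 a2 0"
proof -
  obtain b where b: "a2 = Suc b" using assms(2) by (cases a2) auto
  have "fixfree_ext.defect a1 a2 \<ge> 0"
    using fixfree_ext.defect_nonneg[of a2 a1] fixfree_ext.defect_1[of a1] assms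
    by (cases "a2 = 1") auto
  then have "int (a2 * fixfree a1 a2) \<le> int ((a1 + 1) * fixfree (a1 + 1) b)"
    unfolding fixfree_ext.defect_def using b by (simp add: numeral_2_eq_2 algebra_simps)
  then have ineq: "a2 * fixfree a1 a2 \<le> (a1 + 1) * fixfree (a1 + 1) b" by (simp only: of_nat_le_iff)
  have "F a1 a2 0 = a2 * fixfree a1 a2 * (fact a1 * fact b)"
    using F_0_eq[of a1 a2] b by (simp add: algebra_simps)
  also have "\<dots> \<le> (a1 + 1) * fixfree (a1 + 1) b * (fact a1 * fact b)"
    using ineq by (rule mult_right_mono) simp
  also have "\<dots> = F (a1 + 1) (a2 - 1) 0"
    using F_0_eq[of "a1 + 1" b] b by (simp add: algebra_simps)
  finally show ?thesis .
qed

end
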